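(* The class of coherent spaces is not $\omega$-projective: there is a projective system of coherent topological spaces, indexed by a directed preordered set with a countable cofinal subset, whose projective limit in the category of topological spaces is not coherent.
   Context: A projective system of topological spaces consists of a directed preordered set $(I,\sqsubseteq)$, spaces $X_i$ and continuous maps $p_{ij}\colon X_j\to X_i$ for $i\sqsubseteq j$ with $p_{ii}=\mathrm{id}$ and $p_{ij}\circ p_{jk}=p_{ik}$; its projective limit is its limit in the category of topological spaces. A space is coherent if the intersection of any two compact saturated subsets is compact (saturated = upward closed in the specialization preorder $x\le y$ iff every open neighbourhood of $x$ contains $y$; compactness assumes no separation axiom). *)

theory Defs
  imports "HOL-Analysis.Analysis"
begin

definition spec_le :: "'a topology \<Rightarrow> 'a \<Rightarrow> 'a \<Rightarrow> bool" where
  "spec_le X x y \<longleftrightarrow> x \<in> topspace X \<and> y \<in> topspace X \<and>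
     (\<forall>U. openin X U \<and> x \<in> U \<longrightarrow> y \<in> U)"

definition saturated_in :: "'a topology \<Rightarrow> 'a set \<Rightarrow> bool" where
  "saturated_in X K \<longleftrightarrow> K \<subseteq> topspace X \<and> (\<forall>x y. x \<in> K \<and> spec_le X x y \<longrightarrow> y \<in> K)"

text \<open>Coherent: the intersection of two compact saturated subsets is compact
  (compactin assumes no separation axiom).\<close>
definition coherent_space :: "'a topology \<Rightarrow> bool" where
  "coherent_space X \<longleftrightarrow> (\<forall>K L. compactin X K \<and> saturated_in X K \<and>
       compactin X L \<and> saturated_in X L \<longrightarrow> compactin X (K \<inter> L))"

definition directed_preorder :: "'i set \<Rightarrow> ('i \<Rightarrow> 'i \<Rightarrow> bool) \<Rightarrow> bool" where
  "directed_preorder I le \<longleftrightarrow> I \<noteq> {} \<and>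
     (\<forall>i\<in>I. le i i) \<and>
     (\<forall>i\<in>I. \<forall>j\<in>I. \<forall>k\<in>I. le i j \<and> le j k \<longrightarrow> le i k) \<and>
     (\<forall>i\<in>I. \<forall>j\<in>I. \<exists>k\<in>I. le i k \<and> le j k)"

definition projective_system ::
  "'i set \<Rightarrow> ('i \<Rightarrow> 'i \<Rightarrow> bool) \<Rightarrow> ('i \<Rightarrow> 'a topology) \<Rightarrow> ('i \<Rightarrow> 'i \<Rightarrow> 'a \<Rightarrow> 'a) \<Rightarrow> bool" where
  "projective_system I le X p \<longleftrightarrow>
     (\<forall>i\<in>I. \<forall>j\<in>I. le i j \<longrightarrow> continuous_map (X j) (X i) (p i j)) \<and>
     (\<forall>i\<in>I. \<forall>x\<in>topspace (X i). p i i x = x) \<and>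
     (\<forall>i\<in>I. \<forall>j\<in>I. \<forall>k\<in>I. le i j \<and> le j k \<longrightarrow>
        (\<forall>x\<in>topspace (X k). p i j (p j k x) = p i k x))"

definition projective_limit ::
  "'i set \<Rightarrow> ('i \<Rightarrow> 'i \<Rightarrow> bool) \<Rightarrow> ('i \<Rightarrow> 'a topology) \<Rightarrow> ('i \<Rightarrow> 'i \<Rightarrow> 'a \<Rightarrow> 'a) \<Rightarrow> ('i \<Rightarrow> 'a) topology" where
  "projective_limit I le X p =
     subtopology (product_topology X I)
       {f \<in> topspace (product_topology X I). \<forall>i\<in>I. \<forall>j\<in>I. le i j \<longrightarrow> p i j (f j) = f i}"

definition has_countable_cofinal :: "'i set \<Rightarrow> ('i \<Rightarrow> 'i \<Rightarrow> bool) \<Rightarrow> bool" where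
  "has_countable_cofinal I le \<longleftrightarrow> (\<exists>C\<subseteq>I. countable C \<and> (\<forall>i\<in>I. \<exists>c\<in>C. le i c))"

end

theory Submission
  imports Defs "HOL-Library.Countable_Set"
begin

(* The points are the finite subsets of the natural numbers together with two points at
   infinity, encoded as the infinite sets UNIV and -{0}.  The stage indexed by a finite set A
   isolates the finite subsets of A and glues everything else together: an open set containing
   any other point contains all finite sets not below A.  A stage has only finitely many open
   sets, so it is coherent.  As the bonding maps are identities, the limit carries the supremum
   of the stage topologies: there every finite set is an isolated point, while every
   neighbourhood of a point at infinity contains all but finitely many finite sets.  So the
   finite sets together with either point at infinity form a compact open, hence saturated,
   set, but the intersection of the two is infinite and discrete, hence not compact. *)

lemma compactin_of_finite_opens:
  assumes "finite {U. openin X U}" and "K \<subseteq> topspace X"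
  shows "compactin X K"
  unfolding compactin_def
proof (intro conjI allI impI)
  fix \<U> assume \<U>: "Ball \<U> (openin X) \<and> K \<subseteq> \<Union>\<U>"
  then have "\<U> \<subseteq> {U. openin X U}"
    by blast
  then have "finite \<U>"
    using assms(1) by (rule finite_subset)
  with \<U> show "\<exists>\<F>. finite \<F> \<and> \<F> \<subseteq> \<U> \<and> K \<subseteq> \<Union>\<F>" by blast
qed (fact assms(2))

lemma coherent_space_of_finite_opens:
  assumes "finite {U. openin X U}"
  shows "coherent_space X"
  unfolding coherent_space_def
  by (meson assms compactin_of_finite_opens compactin_subset_topspace le_infI1)

lemma compactin_if_cofinite_nbhds:
  assumes "K \<subseteq> topspace X" and "x \<in> K"
    and "\<And>U. openin X U \<Longrightarrow> x \<in> U \<Longrightarrow> finite (K - U)"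
  shows "compactin X K"
  unfolding compactin_def
proof (intro conjI allI impI)
  fix \<U> assume \<U>: "Ball \<U> (openin X) \<and> K \<subseteq> \<Union>\<U>"
  then obtain U where U: "U \<in> \<U>" "x \<in> U"
    using assms(2) by blast
  have "\<forall>y\<in>K - U. \<exists>V\<in>\<U>. y \<in> V"
    using \<U> by blast
  then obtain g where g: "\<And>y. y \<in> K - U \<Longrightarrow> g y \<in> \<U> \<and> y \<in> g y"
    by metis
  have "finite (K - U)"
    using \<U> U assms(3) by blast
  with U g show "\<exists>\<F>. finite \<F> \<and> \<F> \<subseteq> \<U> \<and> K \<subseteq> \<Union>\<F>"
    by (intro exI[of _ "insert U (g ` (K - U))"]) blast
qed (fact assms(1))

lemma finite_if_compactin_open_points:
  assumes "compactin X K" and "\<And>x. x \<in> K \<Longrightarrow> openin X {x}"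
  shows "finite K"
proof -
  have "x \<notin> X derived_set_of K" if "x \<in> K" for x
    using assms(2)[OF that] unfolding in_derived_set_of by blast
  then have "K \<inter> X derived_set_of K = {}"
    by blast
  then show ?thesis
    using assms(1) discrete_compactin_eq_finite by blast
qed

lemma saturated_in_openin:
  assumes "openin X U"
  shows "saturated_in X U"
  using assms openin_subset unfolding saturated_in_def spec_le_def by blast

lemma continuous_map_id_finer:
  assumes "topspace X = topspace Y" and "\<And>U. openin Y U \<Longrightarrow> openin X U"
  shows "continuous_map X Y (\<lambda>x. x)"
  unfolding continuous_map_def
proof (intro conjI allI impI)
  show "(\<lambda>x. x) \<in> topspace X \<rightarrow> topspace Y"
    using assms(1) by simp
  fix U assume U: "openin Y U"
  then have "{x \<in> topspace X. x \<in> U} = U"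
    using openin_subset assms(1) by blast
  then show "openin X {x \<in> topspace X. x \<in> U}"
    using assms(2) U by simp
qed

lemma continuous_map_projective_limit_proj:
  assumes "i \<in> I"
  shows "continuous_map (projective_limit I le X p) (X i) (\<lambda>f. f i)"
  unfolding projective_limit_def
  by (intro continuous_map_from_subtopology continuous_map_product_projection assms)

lemma continuous_map_into_projective_limit:
  assumes "\<And>i. i \<in> I \<Longrightarrow> continuous_map Z (X i) (g i)"
    and "\<And>z i j. z \<in> topspace Z \<Longrightarrow> i \<in> I \<Longrightarrow> j \<in> I \<Longrightarrow> le i j \<Longrightarrow> p i j (g j z) = g i z"
  shows "continuous_map Z (projective_limit I le X p) (\<lambda>z. \<lambda>i\<in>I. g i z)"
  unfolding projective_limit_def
proof (rule continuous_map_into_subtopology)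
  show "continuous_map Z (product_topology X I) (\<lambda>z. \<lambda>i\<in>I. g i z)"
    using assms(1) by (auto simp: continuous_map_componentwise)
  then show "(\<lambda>z. \<lambda>i\<in>I. g i z) \<in> topspace Z \<rightarrow>
      {f \<in> topspace (product_topology X I). \<forall>i\<in>I. \<forall>j\<in>I. le i j \<longrightarrow> p i j (f j) = f i}"
    using assms(2) continuous_map_image_subset_topspace by fastforce
qed

lemma topspace_projective_limit_identity:
  assumes "directed_preorder I le" and "\<And>i. i \<in> I \<Longrightarrow> topspace (X i) = S"
  shows "topspace (projective_limit I le X (\<lambda>i j x. x)) = (\<lambda>y. \<lambda>i\<in>I. y) ` S"
proof -
  obtain i0 where i0: "i0 \<in> I"
    using assms(1) unfolding directed_preorder_def by blast
  have "f = (\<lambda>i\<in>I. f i0)" if f: "f \<in> (\<Pi>\<^sub>E i\<in>I. S)" "\<forall>i\<in>I. \<forall>j\<in>I. le i j \<longrightarrow> f j = f i" for f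
  proof
    fix i show "f i = (\<lambda>i\<in>I. f i0) i"
    proof (cases "i \<in> I")
      case True
      then obtain k where "k \<in> I" "le i k" "le i0 k"
        using assms(1) i0 unfolding directed_preorder_def by blast
      then have "f k = f i" "f k = f i0"
        using True i0 f(2) by blast+
      with True show ?thesis
        by simp
    qed (use f(1) in auto)
  qed
  then show ?thesis
    using i0 assms(2) unfolding projective_limit_def by (auto simp: PiE_iff)
qed

definition points :: "nat set set" where
  "points = Collect finite \<union> {UNIV, -{0}}"

definition beyond :: "nat set \<Rightarrow> nat set set" where
  "beyond A = Collect finite - Pow A"

definition stage_open :: "nat set \<Rightarrow> nat set set \<Rightarrow> bool" where
  "stage_open A U \<longleftrightarrow> U \<subseteq> points \<and> (U \<subseteq> Pow A \<or> beyond A \<subseteq> U)"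

definition stage :: "nat set \<Rightarrow> nat set topology" where
  "stage A = topology (stage_open A)"

(* Coarser than every stage, hence than the limit, and compactness is evident here. *)
definition ends_open :: "nat set set \<Rightarrow> bool" where
  "ends_open U \<longleftrightarrow> U \<subseteq> points \<and> (UNIV \<in> U \<or> -{0} \<in> U \<longrightarrow> finite (Collect finite - U))"

definition ends_topology :: "nat set topology" where
  "ends_topology = topology ends_open"

lemma infinite_points_at_infinity: "infinite (UNIV :: nat set)" "infinite (-{0 :: nat})"
  by (simp_all add: infinite_UNIV_char_0)

lemma openin_stage: "openin (stage A) = stage_open A"
proof -
  have "istopology (stage_open A)"
    unfolding istopology_def stage_open_def by blast
  then show ?thesis
    by (simp add: stage_def)
qed

lemma topspace_stage: "topspace (stage A) = points"
proof -
  have "stage_open A points"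
    unfolding stage_open_def beyond_def points_def by blast
  then show ?thesis
    unfolding topspace_def openin_stage stage_open_def by blast
qed

lemma openin_ends_topology: "openin ends_topology = ends_open"
proof -
  have "istopology ends_open"
    unfolding istopology_def
  proof (intro conjI allI impI)
    fix S T assume "ends_open S" "ends_open T"
    then show "ends_open (S \<inter> T)"
      unfolding ends_open_def by (auto simp: Diff_Int)
  next
    fix \<K> assume "\<forall>K\<in>\<K>. ends_open K"
    then show "ends_open (\<Union>\<K>)"
      unfolding ends_open_def by (blast intro: finite_subset[rotated])
  qed
  then show ?thesis
    by (simp add: ends_topology_def)
qed

lemma topspace_ends_topology: "topspace ends_topology = points"
proof -
  have "ends_open points"
    unfolding ends_open_def points_def by auto
  then show ?thesis
    unfolding topspace_def openin_ends_topology ends_open_def by blast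
qed

lemma finite_opens_stage:
  assumes "finite A"
  shows "finite {U. openin (stage A) U}"
proof -
  let ?F = "Pow A \<union> {UNIV, -{0}}"
  have "{U. openin (stage A) U} \<subseteq> {P \<union> Q |P Q. P \<subseteq> ?F \<and> Q \<in> {{}, beyond A}}"
  proof safe
    fix U assume "openin (stage A) U"
    then have "U \<subseteq> points" "U \<subseteq> Pow A \<or> beyond A \<subseteq> U"
      by (simp_all add: openin_stage stage_open_def)
    then have "U = (U - beyond A) \<union> (U \<inter> beyond A)" "U - beyond A \<subseteq> ?F"
        "U \<inter> beyond A \<in> {{}, beyond A}"
      unfolding points_def beyond_def by blast+
    then show "\<exists>P Q. U = P \<union> Q \<and> P \<subseteq> ?F \<and> Q \<in> {{}, beyond A}"
      by blast
  qed
  moreover have "finite {P \<union> Q |P Q. P \<subseteq> ?F \<and> Q \<in> {{}, beyond A}}"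
    using assms by (intro finite_image_set2) simp_all
  ultimately show ?thesis
    by (rule finite_subset)
qed

lemma coherent_stage: "finite A \<Longrightarrow> coherent_space (stage A)"
  by (intro coherent_space_of_finite_opens finite_opens_stage)

lemma continuous_map_stage_mono:
  assumes "A \<subseteq> B"
  shows "continuous_map (stage B) (stage A) (\<lambda>x. x)"
proof (rule continuous_map_id_finer)
  fix U assume "openin (stage A) U"
  moreover have "beyond B \<subseteq> beyond A"
    using assms unfolding beyond_def by blast
  ultimately show "openin (stage B) U"
    using assms unfolding openin_stage stage_open_def by blast
qed (simp add: topspace_stage)

lemma continuous_map_ends_topology_stage:
  assumes "finite A"
  shows "continuous_map ends_topology (stage A) (\<lambda>x. x)"
proof (rule continuous_map_id_finer)
  fix U assume "openin (stage A) U"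
  then have U: "U \<subseteq> points" "U \<subseteq> Pow A \<or> beyond A \<subseteq> U"
    by (simp_all add: openin_stage stage_open_def)
  have "finite (Collect finite - U)" if "UNIV \<in> U \<or> -{0} \<in> U"
  proof -
    have "\<not> U \<subseteq> Pow A"
      using that assms infinite_points_at_infinity finite_subset by blast
    then have "Collect finite - U \<subseteq> Pow A"
      using U unfolding beyond_def by blast
    then show ?thesis
      using assms by (meson finite_Pow_iff finite_subset)
  qed
  with U show "openin ends_topology U"
    by (simp add: openin_ends_topology ends_open_def)
qed (simp add: topspace_stage topspace_ends_topology)

lemma compactin_ends_topology:
  assumes "z \<in> {UNIV, -{0}}"
  shows "compactin ends_topology (insert z (Collect finite))"
proof (rule compactin_if_cofinite_nbhds)
  show "insert z (Collect finite) \<subseteq> topspace ends_topology"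
    using assms by (auto simp: topspace_ends_topology points_def)
  fix U assume "openin ends_topology U" "z \<in> U"
  then have "finite (Collect finite - U)"
    using assms by (auto simp: openin_ends_topology ends_open_def)
  then show "finite (insert z (Collect finite) - U)"
    using \<open>z \<in> U\<close> by (simp add: insert_Diff_if)
qed simp

definition stage_limit :: "(nat set \<Rightarrow> nat set) topology" where
  "stage_limit = projective_limit (Collect finite) (\<subseteq>) stage (\<lambda>i j x. x)"

definition const_thread :: "nat set \<Rightarrow> nat set \<Rightarrow> nat set" where
  "const_thread y = (\<lambda>i\<in>Collect finite. y)"

lemma const_thread_apply: "finite i \<Longrightarrow> const_thread y i = y"
  by (simp add: const_thread_def)

lemma inj_const_thread: "inj const_thread"
  by (metis const_thread_apply finite.emptyI injI)

lemma directed_preorder_finite_subsets: "directed_preorder (Collect finite) (\<subseteq>)"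
  unfolding directed_preorder_def
  by (auto intro: exI[of _ "{}"] intro!: bexI[where x = "_ \<union> _"])

lemma topspace_stage_limit: "topspace stage_limit = const_thread ` points"
  unfolding stage_limit_def const_thread_def
  by (intro topspace_projective_limit_identity directed_preorder_finite_subsets topspace_stage)

lemma stage_limit_preimage:
  assumes "finite A" and "S \<subseteq> points"
  shows "{f \<in> topspace stage_limit. f A \<in> S} = const_thread ` S"
  using assms by (auto simp: topspace_stage_limit const_thread_apply)

lemma openin_stage_limit_preimage:
  assumes "finite A" and "stage_open A U"
  shows "openin stage_limit (const_thread ` U)"
proof -
  have "openin stage_limit {f \<in> topspace stage_limit. f A \<in> U}"
  proof (rule openin_continuous_map_preimage)
    show "continuous_map stage_limit (stage A) (\<lambda>f. f A)"
      unfolding stage_limit_def using assms(1) by (intro continuous_map_projective_limit_proj) simp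
    show "openin (stage A) U"
      using assms(2) by (simp add: openin_stage)
  qed
  moreover have "U \<subseteq> points"
    using assms(2) by (simp add: stage_open_def)
  ultimately show ?thesis
    using stage_limit_preimage[OF assms(1)] by simp
qed

lemma continuous_map_const_thread: "continuous_map ends_topology stage_limit const_thread"
  unfolding stage_limit_def const_thread_def
  by (intro continuous_map_into_projective_limit continuous_map_ends_topology_stage) simp_all

lemma not_compactin_const_threads: "\<not> compactin stage_limit (const_thread ` Collect finite)"
proof
  assume compact: "compactin stage_limit (const_thread ` Collect finite)"
  have open_point: "openin stage_limit {const_thread A}" if "finite A" for A
  proof -
    have "stage_open A {A}"
      using that unfolding stage_open_def points_def by blast
    then have "openin stage_limit (const_thread ` {A})"
      by (rule openin_stage_limit_preimage[OF that])
    then show ?thesis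
      by simp
  qed
  have "finite (const_thread ` Collect finite)"
    using compact
  proof (rule finite_if_compactin_open_points)
    fix x assume "x \<in> const_thread ` Collect finite"
    then show "openin stage_limit {x}"
      using open_point by blast
  qed
  moreover have "infinite (Collect finite :: nat set set)"
  proof (rule infinite_super)
    show "range (\<lambda>n::nat. {n}) \<subseteq> Collect finite"
      by auto
    show "infinite (range (\<lambda>n::nat. {n}))"
      by (rule range_inj_infinite) (simp add: inj_def)
  qed
  moreover have "inj_on const_thread (Collect finite)"
    using inj_const_thread by (rule inj_on_subset) simp
  ultimately show False
    by (metis finite_imageD)
qed

lemma not_coherent_stage_limit: "\<not> coherent_space stage_limit"
proof -
  define K where "K z = const_thread ` insert z (Collect finite)" for z
  have "compactin stage_limit (K z)" if "z \<in> {UNIV, -{0}}" for z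
    unfolding K_def
    by (rule image_compactin[OF compactin_ends_topology[OF that] continuous_map_const_thread])
  moreover have "saturated_in stage_limit (K z)" if "z \<in> {UNIV, -{0}}" for z
  proof -
    have "stage_open {} (insert z (Collect finite))"
      using that unfolding stage_open_def beyond_def points_def by blast
    then show ?thesis
      unfolding K_def by (intro saturated_in_openin openin_stage_limit_preimage) simp_all
  qed
  moreover have "K UNIV \<inter> K (-{0}) = const_thread ` Collect finite"
    using inj_const_thread infinite_points_at_infinity unfolding K_def by (auto dest: injD)
  ultimately show ?thesis
    using not_compactin_const_threads unfolding coherent_space_def by (metis insertI1 insertI2)
qed

theorem corollary4p6:
  shows "\<exists>(I :: nat set set) (le :: nat set \<Rightarrow> nat set \<Rightarrow> bool)
            (X :: nat set \<Rightarrow> nat set topology) (p :: nat set \<Rightarrow> nat set \<Rightarrow> nat set \<Rightarrow> nat set).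
           directed_preorder I le \<and> has_countable_cofinal I le \<and>
           projective_system I le X p \<and>
           (\<forall>i\<in>I. coherent_space (X i)) \<and>
           \<not> coherent_space (projective_limit I le X p)"
proof (intro exI conjI)
  show "directed_preorder (Collect finite) (\<subseteq>)"
    by (rule directed_preorder_finite_subsets)
  show "has_countable_cofinal (Collect finite :: nat set set) (\<subseteq>)"
    unfolding has_countable_cofinal_def by (blast intro: countable_Collect_finite)
  show "projective_system (Collect finite) (\<subseteq>) stage (\<lambda>i j x. x)"
    unfolding projective_system_def by (simp add: continuous_map_stage_mono)
  show "\<forall>i\<in>Collect finite. coherent_space (stage i)"
    by (simp add: coherent_stage)
  show "\<not> coherent_space (projective_limit (Collect finite) (\<subseteq>) stage (\<lambda>i j x. x))"
    using not_coherent_stage_limit unfolding stage_limit_def .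
qed

end
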